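(* For all $n,k\geqslant 1$, the number $\mathfrak{f}_{n,k}$ of words of length $n$ on the alphabet $\{1,\dots,k\}$ avoiding both patterns $010$ and $120$ and containing every letter of $\{1,\dots,k\}$ equals the number of dissections of a convex $(n+2)$-gon by non-crossing diagonals into $k$ regions, and $$\mathfrak{f}_{n,k}=\frac{1}{k}\binom{n-1}{k-1}\binom{n+k}{k-1}.$$
   Context: A word contains a pattern $p$ if some subsequence is order-isomorphic to $p$; otherwise it avoids $p$. Avoiding $010$: no $i<j<l$ with $\omega_i=\omega_l<\omega_j$. Avoiding $120$: no $i<j<l$ with $\omega_l<\omega_i<\omega_j$. *)

theory Defs
  imports Complex_Main
begin

definition avoids010 :: "nat list \<Rightarrow> bool" where
  "avoids010 w \<longleftrightarrow> \<not> (\<exists>i j l. i < j \<and> j < l \<and> l < length w \<and> w ! i = w ! l \<and> w ! l < w ! j)"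

definition avoids120 :: "nat list \<Rightarrow> bool" where
  "avoids120 w \<longleftrightarrow> \<not> (\<exists>i j l. i < j \<and> j < l \<and> l < length w \<and> w ! l < w ! i \<and> w ! i < w ! j)"

definition f_words :: "nat \<Rightarrow> nat \<Rightarrow> nat list set" where
  "f_words n k = {w. length w = n \<and> set w = {1..k} \<and> avoids010 w \<and> avoids120 w}"

text \<open>Convex m-gon with vertices 0,...,m-1 in cyclic order. A diagonal is a pair (i,j),
  i < j, of non-adjacent vertices.\<close>
definition diagonals :: "nat \<Rightarrow> (nat \<times> nat) set" where
  "diagonals m = {(i, j). i < j \<and> j < m \<and> i + 2 \<le> j \<and> \<not> (i = 0 \<and> j + 1 = m)}"

definition crossing :: "nat \<times> nat \<Rightarrow> nat \<times> nat \<Rightarrow> bool" where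
  "crossing d e \<longleftrightarrow> (case d of (a, b) \<Rightarrow> case e of (c, e') \<Rightarrow>
      (a < c \<and> c < b \<and> b < e') \<or> (c < a \<and> a < e' \<and> e' < b))"

text \<open>A dissection of the convex m-gon by non-crossing diagonals into k regions:
  a set of pairwise non-crossing diagonals; a set of r such diagonals cuts the polygon
  into exactly r+1 regions, so k regions means k-1 diagonals.\<close>
definition dissections :: "nat \<Rightarrow> nat \<Rightarrow> (nat \<times> nat) set set" where
  "dissections m k = {D. D \<subseteq> diagonals m \<and> (\<forall>d\<in>D. \<forall>e\<in>D. \<not> crossing d e) \<and> card D + 1 = k}"

end

theory Submission
  imports Defs
begin

text \<open>
  Both families are refined by a statistic s: for a word on k letters, k + 1 minus its last
  letter; for a dissection into k regions, the number of regions at the last vertex. In both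
  cases the objects of size n + 1 with statistic s arise bijectively from the objects of size n
  with k blocks and statistic at least s, together with those with k - 1 blocks and statistic
  at least s - 1.

  For words this is appending the letter x = k + 1 - s, which keeps both patterns avoided
  exactly when x is at least the last letter; the letter x either occurred before or is new, in
  which case the letters from x on are shifted up. For dissections a new vertex is inserted
  between the last and the first vertex, and the first s neighbours of the old last vertex are
  moved to it; the side joining the two last vertices then lies on a triangle or not.

  The common refined count is s (n+k-s)! / (k! (k-s)! (n+1-k)!), as one checks against the
  recurrence. Summing over s, the totals T n k satisfy T n k + T n (k-1) = (refined count of
  size n + 1 with s = 1), which telescopes to the product of binomials.
\<close>

section \<open>The common recurrence and its solution\<close>

(* The number of words of length n + 1 on k letters, and equally of dissections of the
   (n + 3)-gon into k regions, with statistic s. *)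
fun refined_count :: "nat \<Rightarrow> nat \<Rightarrow> nat \<Rightarrow> nat" where
  "refined_count 0 k s = (if k = 1 \<and> s = 1 then 1 else 0)"
| "refined_count (Suc n) k s =
    (if s = 0 then 0 else (\<Sum>t=s..k. refined_count n k t) + (\<Sum>t=s-1..k-1. refined_count n (k-1) t))"

lemma refined_count_0_right [simp]: "refined_count n k 0 = 0"
  by (cases n) auto

lemma refined_count_eq_0_if_gt: "k < s \<Longrightarrow> refined_count n k s = 0"
proof (induction n arbitrary: k s)
  case (Suc n)
  have "refined_count n (k-1) t = 0" if "t \<in> {s-1..k-1}" for t
    using Suc that by (cases "t = 0") auto
  then have "(\<Sum>t=s-1..k-1. refined_count n (k-1) t) = 0"
    by simp
  then show ?case using Suc by simp
qed simp

lemma refined_count_Suc_step: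
  assumes "s \<ge> 1"
  shows "refined_count (Suc n) k s
    = refined_count (Suc n) k (Suc s) + refined_count n k s + refined_count n (k-1) (s-1)"
proof -
  have "(\<Sum>t=s..k. refined_count n k t) = refined_count n k s + (\<Sum>t=Suc s..k. refined_count n k t)"
    by (cases "s \<le> k") (simp_all add: sum.atLeast_Suc_atMost refined_count_eq_0_if_gt)
  moreover have "(\<Sum>t=s-1..k-1. refined_count n (k-1) t)
      = refined_count n (k-1) (s-1) + (\<Sum>t=s..k-1. refined_count n (k-1) t)"
    using assms by (cases "s - 1 \<le> k - 1")
      (simp_all add: sum.atLeast_Suc_atMost refined_count_eq_0_if_gt)
  ultimately show ?thesis using assms by simp
qed

(* 1 / i!, extended by 0 to negative i (that is, 1 / Gamma (i + 1)), so that the closed form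
   below needs no case distinctions. *)
definition rfact :: "int \<Rightarrow> real" where
  "rfact i = (if i < 0 then 0 else 1 / fact (nat i))"

lemma rfact_neg: "i < 0 \<Longrightarrow> rfact i = 0"
  by (simp add: rfact_def)

lemma rfact_of_nat: "rfact (int m) = 1 / fact m"
  by (simp add: rfact_def)

lemma rfact_diff_one: "rfact (i - 1) = of_int i * rfact i"
proof (cases "i \<le> 0")
  case True
  then show ?thesis by (cases "i = 0") (auto simp: rfact_def)
next
  case False
  define m where "m = nat (i - 1)"
  then have i: "i = int m + 1" using False by simp
  have "rfact (i - 1) = 1 / fact m" "rfact i = 1 / ((real m + 1) * fact m)" "of_int i = real m + 1"
    unfolding i rfact_def by (simp_all add: nat_add_distrib fact_Suc add.commute)
  moreover have "real m + 1 \<noteq> 0" by linarith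
  ultimately show ?thesis by simp
qed

lemma binomial_rfact: "real (a choose b) = fact a * rfact (int b) * rfact (int a - int b)"
proof (cases "b \<le> a")
  case True
  then have "rfact (int a - int b) = 1 / fact (a - b)"
    using rfact_of_nat[of "a - b"] by (simp add: of_nat_diff)
  with True show ?thesis by (simp add: binomial_fact rfact_of_nat)
qed (simp add: rfact_neg)

definition refined_formula :: "nat \<Rightarrow> nat \<Rightarrow> nat \<Rightarrow> real" where
  "refined_formula n k s
    = real s * fact (n + k - s) * rfact (int k - int s) * rfact (int n + 1 - int k) / fact k"

lemma refined_formula_eq_0_if_gt: "k < s \<Longrightarrow> refined_formula n k s = 0"
  unfolding refined_formula_def by (simp add: rfact_neg)

lemma refined_formula_Suc_step:
  assumes "1 \<le> s" "s \<le> k"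
  shows "refined_formula (Suc n) k s = refined_formula (Suc n) k (Suc s) + refined_formula n k s
    + (if s = 1 then 0 else refined_formula n (k-1) (s-1))"
proof -
  define N where "N = n + k - s"
  define x where "x = int k - int s"
  define y where "y = int n + 2 - int k"
  define C where "C = fact N * rfact x * rfact y / fact k"
  have fk: "(fact k :: real) = real k * fact (k - 1)"
    using assms by (simp add: fact_reduce)
  have L: "refined_formula (Suc n) k s = C * (real s * (real N + 1))"
    unfolding refined_formula_def C_def N_def x_def y_def using assms
    by (simp add: Suc_diff_le fact_Suc algebra_simps)
  have R1: "refined_formula (Suc n) k (Suc s) = C * ((real s + 1) * of_int x)"
  proof -
    have "rfact (int k - int (Suc s)) = of_int x * rfact x"
      using rfact_diff_one[of x] unfolding x_def by (simp add: algebra_simps)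
    moreover have "Suc n + k - Suc s = N" "int (Suc n) + 1 - int k = y"
      unfolding N_def y_def by simp_all
    ultimately show ?thesis unfolding refined_formula_def C_def by (simp add: ac_simps)
  qed
  have R2: "refined_formula n k s = C * (real s * of_int y)"
  proof -
    have "rfact (int n + 1 - int k) = of_int y * rfact y"
      using rfact_diff_one[of y] unfolding y_def by (simp add: algebra_simps)
    then show ?thesis unfolding refined_formula_def C_def N_def x_def by (simp add: ac_simps)
  qed
  have R3: "(if s = 1 then 0 else refined_formula n (k-1) (s-1)) = C * ((real s - 1) * real k)"
  proof (cases "s = 1")
    case False
    have "n + (k-1) - (s-1) = N" "int (k-1) - int (s-1) = x" "int n + 1 - int (k-1) = y"
      "real (s - 1) = real s - 1"
      unfolding N_def x_def y_def using assms by auto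
    then show ?thesis
      using False assms unfolding refined_formula_def C_def fk by (simp add: field_simps)
  qed simp
  have "real s * (real N + 1) = (real s + 1) * of_int x + real s * of_int y + (real s - 1) * real k"
    unfolding N_def x_def y_def using assms by (simp add: of_nat_diff algebra_simps)
  then show ?thesis unfolding L R1 R2 R3 by (simp only: distrib_left)
qed

lemma refined_count_eq_formula:
  "1 \<le> s \<Longrightarrow> real (refined_count n k s) = refined_formula n k s"
proof (induction n arbitrary: k s)
  case 0
  then show ?case
    by (cases "k < s"; cases "k = 1")
      (auto simp: refined_formula_eq_0_if_gt refined_formula_def rfact_def)
next
  case (Suc n)
  have "real (refined_count (Suc n) k s) = refined_formula (Suc n) k s" if "s \<le> Suc k" "1 \<le> s" for s
    using that
  proof (induction s rule: inc_induct)
    case base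
    then show ?case
      by (simp del: refined_count.simps add: refined_count_eq_0_if_gt refined_formula_eq_0_if_gt)
  next
    case (step s)
    have "real (refined_count (Suc n) k s) = real (refined_count (Suc n) k (Suc s))
        + real (refined_count n k s) + real (refined_count n (k-1) (s-1))"
      using refined_count_Suc_step[OF step.prems] by simp
    also have "\<dots> = refined_formula (Suc n) k s"
      using refined_formula_Suc_step[of s k n] step Suc.IH by simp
    finally show ?case .
  qed
  then show ?case
    using Suc.prems by (cases "s \<le> Suc k") (simp_all add: refined_count_eq_0_if_gt refined_formula_eq_0_if_gt)
qed

definition total_count :: "nat \<Rightarrow> nat \<Rightarrow> nat" where
  "total_count n k = (\<Sum>s\<le>k. refined_count n k s)"

lemma refined_count_Suc_1:
  assumes "k \<ge> 1"
  shows "refined_count (Suc n) k 1 = total_count n k + total_count n (k-1)"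
proof -
  have "(\<Sum>s\<le>k'. refined_count n k' s) = (\<Sum>s=1..k'. refined_count n k' s)" for k'
    by (simp add: atMost_atLeast0 sum.atLeast_Suc_atMost)
  then show ?thesis using assms by (simp add: total_count_def atLeast0AtMost)
qed

lemma binomial_product_recurrence:
  assumes "k \<ge> 2"
  shows "1 / real k * real (n choose (k-1)) * real ((n+1+k) choose (k-1))
    + 1 / real (k-1) * real (n choose (k-2)) * real ((n+k) choose (k-2))
    = refined_formula (Suc n) k 1"
proof -
  define R where "R = rfact (int k - 1)"
  define T where "T = rfact (int n + 2 - int k)"
  define W where "W = fact (n+k) * R * R * T * rfact (int n + 2) * fact n"
  have k: "real k > 1" "int (k-1) = int k - 1" "int (k-2) = int k - 1 - 1"
    "real (k - 1) = real k - 1" "real (k - 2) = real k - 2" using assms by auto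
  have fact_k: "(fact k :: real) = real k * fact (k - 1)"
    using assms by (simp add: fact_reduce)
  have R: "R = 1 / fact (k - 1)" "rfact (int (k-2)) = (real k - 1) * R"
    unfolding R_def using rfact_of_nat[of "k-1"] rfact_diff_one[of "int k - 1"] k by simp_all
  have fact_n2: "rfact (int n + 2) * fact n * ((real n + 1) * (real n + 2)) = 1"
  proof -
    have "(fact (Suc (Suc n)) :: real) = fact n * ((real n + 1) * (real n + 2))"
      by (simp add: fact_Suc algebra_simps)
    moreover have "(fact (Suc (Suc n)) :: real) > 0" by simp
    ultimately show ?thesis using rfact_of_nat[of "Suc (Suc n)"] by (simp add: ac_simps)
  qed
  have B1: "real (n choose (k-1)) * real ((n+1+k) choose (k-1))
      = W * (of_int (int n + 2 - int k) * (real n + real k + 1))"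
  proof -
    have "rfact (int n - int (k-1)) = of_int (int n + 2 - int k) * T"
      unfolding T_def using rfact_diff_one[of "int n + 2 - int k"] k by (simp add: algebra_simps)
    moreover have "int (n+1+k) - int (k-1) = int n + 2"
      "(fact (n+1+k) :: real) = (real n + real k + 1) * fact (n+k)"
      using k by (simp_all add: fact_Suc)
    ultimately show ?thesis unfolding binomial_rfact W_def R_def k by (simp add: ac_simps)
  qed
  have B2: "real (n choose (k-2)) * real ((n+k) choose (k-2)) = W * (real k - 1) * (real k - 1)"
  proof -
    have "rfact (int n - int (k-2)) = T" "rfact (int (n+k) - int (k-2)) = rfact (int n + 2)"
      unfolding T_def using assms by (auto intro!: arg_cong[where f = rfact])
    then show ?thesis unfolding binomial_rfact R(2) W_def by (simp add: ac_simps)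
  qed
  have F: "refined_formula (Suc n) k 1 = W * ((real n + 1) * (real n + 2)) / real k"
  proof -
    have "refined_formula (Suc n) k 1 = fact (n + k) * R * T / fact k"
      unfolding refined_formula_def R_def T_def using assms by (simp add: add.commute)
    also have "\<dots> = fact (n+k) * R * T * (R * (rfact (int n + 2) * fact n * ((real n + 1) * (real n + 2)))) / real k"
      unfolding fact_n2 fact_k R(1) using k by (simp add: field_simps)
    finally show ?thesis unfolding W_def by (simp add: ac_simps)
  qed
  have "of_int (int n + 2 - int k) * (real n + real k + 1) + real k * (real k - 1)
      = (real n + 1) * (real n + 2)"
    by (simp add: algebra_simps)
  moreover have "1 / real k * real (n choose (k-1)) * real ((n+1+k) choose (k-1))
      + 1 / real (k-1) * real (n choose (k-2)) * real ((n+k) choose (k-2))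
      = W * (of_int (int n + 2 - int k) * (real n + real k + 1) + real k * (real k - 1)) / real k"
    unfolding mult.assoc B1 B2 using k by (simp add: field_simps)
  ultimately show ?thesis unfolding F by simp
qed

lemma total_count_closed_form:
  "real (total_count n k) = 1 / real k * real (n choose (k-1)) * real ((n+1+k) choose (k-1))"
proof (induction k rule: less_induct)
  case (less k)
  have step: "real (total_count n k) = refined_formula (Suc n) k 1 - real (total_count n (k-1))"
    if "k \<ge> 1"
    using refined_count_Suc_1[OF that, of n] refined_count_eq_formula[of 1 "Suc n" k] by simp
  consider "k = 0" | "k = 1" | "k \<ge> 2" by linarith
  then show ?case
  proof cases
    case 1
    then show ?thesis by (simp add: total_count_def)
  next
    case 2
    have "refined_formula (Suc n) 1 1 = 1"
      using rfact_of_nat[of 0] rfact_of_nat[of "Suc n"] by (simp add: refined_formula_def add.commute)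
    then show ?thesis using step 2 by (simp add: total_count_def)
  next
    case 3
    then have "k - 1 - 1 = k - 2" "n + 1 + (k - 1) = n + k" by auto
    then show ?thesis
      using step less.IH[of "k-1"] binomial_product_recurrence[OF 3, of n] 3 by simp
  qed
qed

section \<open>Families counted by the recurrence\<close>

lemma card_eq_sum_card_fibers:
  assumes "finite S" "finite R" "g ` S \<subseteq> R"
  shows "card S = (\<Sum>y\<in>R. card {x \<in> S. g x = y})"
  using sum_fun_comp[OF assms, of "\<lambda>_. 1 :: nat"] by simp

lemma card_stat_ge_eq_sum:
  assumes "finite S" "\<And>x. x \<in> S \<Longrightarrow> g x \<le> (k::nat)"
  shows "card {x \<in> S. s \<le> g x} = (\<Sum>t=s..k. card {x \<in> S. g x = t})"
proof -
  have "card {x \<in> S. s \<le> g x} = (\<Sum>t=s..k. card {x \<in> {x \<in> S. s \<le> g x}. g x = t})"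
    by (rule card_eq_sum_card_fibers) (use assms in auto)
  also have "\<dots> = (\<Sum>t=s..k. card {x \<in> S. g x = t})"
    by (intro sum.cong refl arg_cong[where f = card]) auto
  finally show ?thesis .
qed

locale refined_count_family =
  fixes X :: "nat \<Rightarrow> nat \<Rightarrow> 'a set" and stat :: "nat \<Rightarrow> nat \<Rightarrow> 'a \<Rightarrow> nat"
  assumes finite: "finite (X n k)"
    and stat_range: "x \<in> X n k \<Longrightarrow> 1 \<le> stat n k x \<and> stat n k x \<le> k"
    and base: "card {x \<in> X 0 k. stat 0 k x = s} = refined_count 0 k s"
    and step: "1 \<le> s \<Longrightarrow> s \<le> k \<Longrightarrow> card {x \<in> X (Suc n) k. stat (Suc n) k x = s}
      = card {x \<in> X n k. s \<le> stat n k x} + card {x \<in> X n (k-1). s - 1 \<le> stat n (k-1) x}"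
begin

lemma card_stat_eq_refined_count: "card {x \<in> X n k. stat n k x = s} = refined_count n k s"
proof (induction n arbitrary: k s)
  case (Suc n)
  show ?case
  proof (cases "1 \<le> s \<and> s \<le> k")
    case True
    have "card {x \<in> X n k. s \<le> stat n k x} = (\<Sum>t=s..k. refined_count n k t)"
      using card_stat_ge_eq_sum[OF finite, of n k "stat n k" k s] stat_range Suc.IH by simp
    moreover have "card {x \<in> X n (k-1). s - 1 \<le> stat n (k-1) x} = (\<Sum>t=s-1..k-1. refined_count n (k-1) t)"
      using card_stat_ge_eq_sum[OF finite, of n "k-1" "stat n (k-1)" "k-1" "s-1"] stat_range Suc.IH by simp
    ultimately show ?thesis using step[of s k n] True by simp
  next
    case False
    then have "{x \<in> X (Suc n) k. stat (Suc n) k x = s} = {}" using stat_range by fastforce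
    moreover have "refined_count (Suc n) k s = 0"
      using False by (cases "s = 0") (simp_all del: refined_count.simps add: refined_count_eq_0_if_gt)
    ultimately show ?thesis by (simp only: card.empty)
  qed
qed (rule base)

lemma card_eq_total_count: "card (X n k) = total_count n k"
proof -
  have "card (X n k) = (\<Sum>s\<le>k. card {x \<in> X n k. stat n k x = s})"
    by (rule card_eq_sum_card_fibers) (use finite stat_range in auto)
  then show ?thesis by (simp add: total_count_def card_stat_eq_refined_count)
qed

end

section \<open>Words avoiding 010 and 120\<close>

lemma ex_pattern_snoc:
  "(\<exists>i j l. i < j \<and> j < l \<and> l < length (p @ [x]) \<and> Q ((p @ [x]) ! i) ((p @ [x]) ! j) ((p @ [x]) ! l))
   \<longleftrightarrow> (\<exists>i j l. i < j \<and> j < l \<and> l < length p \<and> Q (p ! i) (p ! j) (p ! l))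
     \<or> (\<exists>i j. i < j \<and> j < length p \<and> Q (p ! i) (p ! j) x)"
proof
  assume "\<exists>i j l. i < j \<and> j < l \<and> l < length (p @ [x]) \<and> Q ((p @ [x]) ! i) ((p @ [x]) ! j) ((p @ [x]) ! l)"
  then obtain i j l where "i < j" "j < l" "l < Suc (length p)"
    and Q: "Q ((p @ [x]) ! i) ((p @ [x]) ! j) ((p @ [x]) ! l)" by auto
  then consider "l < length p" | "l = length p" by linarith
  then show "(\<exists>i j l. i < j \<and> j < l \<and> l < length p \<and> Q (p ! i) (p ! j) (p ! l))
     \<or> (\<exists>i j. i < j \<and> j < length p \<and> Q (p ! i) (p ! j) x)"
    by cases (use \<open>i < j\<close> \<open>j < l\<close> Q in \<open>auto simp: nth_append\<close>)
next
  assume "(\<exists>i j l. i < j \<and> j < l \<and> l < length p \<and> Q (p ! i) (p ! j) (p ! l))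
     \<or> (\<exists>i j. i < j \<and> j < length p \<and> Q (p ! i) (p ! j) x)"
  then show "\<exists>i j l. i < j \<and> j < l \<and> l < length (p @ [x]) \<and> Q ((p @ [x]) ! i) ((p @ [x]) ! j) ((p @ [x]) ! l)"
  proof (elim disjE exE conjE)
    fix i j l assume "i < j" "j < l" "l < length p" "Q (p ! i) (p ! j) (p ! l)"
    then show ?thesis by (intro exI[of _ i] exI[of _ j] exI[of _ l]) (simp add: nth_append)
  next
    fix i j assume "i < j" "j < length p" "Q (p ! i) (p ! j) x"
    then show ?thesis by (intro exI[of _ i] exI[of _ j] exI[of _ "length p"]) (simp add: nth_append)
  qed
qed

definition avoids_010_120 :: "nat list \<Rightarrow> bool" where
  "avoids_010_120 w \<longleftrightarrow> avoids010 w \<and> avoids120 w"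

definition ascent_bottoms :: "nat list \<Rightarrow> nat set" where
  "ascent_bottoms w = {w ! i | i. \<exists>j. i < j \<and> j < length w \<and> w ! i < w ! j}"

definition max_ascent_bottom :: "nat list \<Rightarrow> nat" where
  "max_ascent_bottom w = Max (insert 0 (ascent_bottoms w))"

lemma ascent_bottoms_subset: "ascent_bottoms w \<subseteq> set w"
  unfolding ascent_bottoms_def by (blast intro: nth_mem less_trans)

lemma finite_ascent_bottoms: "finite (ascent_bottoms w)"
  using ascent_bottoms_subset finite_subset by blast

lemma all_ascent_bottoms_less_iff:
  "(\<forall>y\<in>ascent_bottoms p. y < x) \<longleftrightarrow>
    \<not> (\<exists>i j. i < j \<and> j < length p \<and> p ! i = x \<and> x < p ! j) \<and>
    \<not> (\<exists>i j. i < j \<and> j < length p \<and> x < p ! i \<and> p ! i < p ! j)"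
proof
  assume "\<forall>y\<in>ascent_bottoms p. y < x"
  then have "p ! i < x" if "i < j" "j < length p" "p ! i < p ! j" for i j
    using that unfolding ascent_bottoms_def by blast
  then show "\<not> (\<exists>i j. i < j \<and> j < length p \<and> p ! i = x \<and> x < p ! j) \<and>
    \<not> (\<exists>i j. i < j \<and> j < length p \<and> x < p ! i \<and> p ! i < p ! j)"
    by (metis less_irrefl less_trans)
next
  assume H: "\<not> (\<exists>i j. i < j \<and> j < length p \<and> p ! i = x \<and> x < p ! j) \<and>
    \<not> (\<exists>i j. i < j \<and> j < length p \<and> x < p ! i \<and> p ! i < p ! j)"
  show "\<forall>y\<in>ascent_bottoms p. y < x"
  proof
    fix y assume "y \<in> ascent_bottoms p"
    then obtain i j where "y = p ! i" "i < j" "j < length p" "p ! i < p ! j"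
      unfolding ascent_bottoms_def by blast
    then show "y < x"
      using H by (cases y x rule: linorder_cases) auto
  qed
qed

lemma avoids_010_120_snoc:
  "avoids_010_120 (p @ [x]) \<longleftrightarrow> avoids_010_120 p \<and> (\<forall>y\<in>ascent_bottoms p. y < x)"
proof -
  have "avoids010 (p @ [x]) \<longleftrightarrow>
      avoids010 p \<and> \<not> (\<exists>i j. i < j \<and> j < length p \<and> p ! i = x \<and> x < p ! j)"
    unfolding avoids010_def ex_pattern_snoc[where Q = "\<lambda>a b c. a = c \<and> c < b"] by simp
  moreover have "avoids120 (p @ [x]) \<longleftrightarrow>
      avoids120 p \<and> \<not> (\<exists>i j. i < j \<and> j < length p \<and> x < p ! i \<and> p ! i < p ! j)"
    unfolding avoids120_def ex_pattern_snoc[where Q = "\<lambda>a b c. c < a \<and> a < b"] by simp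
  ultimately show ?thesis
    unfolding avoids_010_120_def all_ascent_bottoms_less_iff by argo
qed

lemma avoids_010_120_snoc_iff_less:
  "x \<ge> 1 \<Longrightarrow> avoids_010_120 (p @ [x]) \<longleftrightarrow> avoids_010_120 p \<and> max_ascent_bottom p < x"
  unfolding avoids_010_120_snoc max_ascent_bottom_def
  using finite_ascent_bottoms by (auto simp: Max_less_iff)

lemma ascent_bottoms_snoc: "ascent_bottoms (p @ [x]) = ascent_bottoms p \<union> {y \<in> set p. y < x}"
proof (intro equalityI subsetI)
  fix y assume "y \<in> ascent_bottoms (p @ [x])"
  then obtain i j where ij: "y = (p @ [x]) ! i" "i < j" "j < Suc (length p)" "(p @ [x]) ! i < (p @ [x]) ! j"
    unfolding ascent_bottoms_def by auto
  show "y \<in> ascent_bottoms p \<union> {y \<in> set p. y < x}"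
  proof (cases "j < length p")
    case True
    then have "y = p ! i" "p ! i < p ! j" using ij by (simp_all add: nth_append)
    then show ?thesis using ij True unfolding ascent_bottoms_def by blast
  next
    case False
    then have "y = p ! i" "i < length p" "p ! i < x" using ij by (simp_all add: nth_append)
    then show ?thesis by simp
  qed
next
  fix y assume "y \<in> ascent_bottoms p \<union> {y \<in> set p. y < x}"
  then show "y \<in> ascent_bottoms (p @ [x])"
  proof
    assume "y \<in> ascent_bottoms p"
    then obtain i j where "y = p ! i" "i < j" "j < length p" "p ! i < p ! j"
      unfolding ascent_bottoms_def by blast
    then have "y = (p @ [x]) ! i \<and> i < j \<and> j < length (p @ [x]) \<and> (p @ [x]) ! i < (p @ [x]) ! j"
      by (simp add: nth_append)
    then show ?thesis unfolding ascent_bottoms_def by blast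
  next
    assume "y \<in> {y \<in> set p. y < x}"
    then obtain i where "i < length p" "y = p ! i" "y < x" by (auto simp: in_set_conv_nth)
    then have "y = (p @ [x]) ! i \<and> i < length p \<and> length p < length (p @ [x])
        \<and> (p @ [x]) ! i < (p @ [x]) ! length p"
      by (simp add: nth_append)
    then show ?thesis unfolding ascent_bottoms_def by blast
  qed
qed

lemma max_ascent_bottom_snoc:
  assumes "avoids_010_120 (p @ [x])" "x \<ge> 1" "x \<le> 1 \<or> x - 1 \<in> set p"
  shows "max_ascent_bottom (p @ [x]) = x - 1"
proof -
  have "\<forall>y\<in>ascent_bottoms p. y < x" using assms(1) avoids_010_120_snoc by blast
  then show ?thesis
    unfolding max_ascent_bottom_def using assms(2,3) finite_ascent_bottoms
    by (intro Max_eqI) (auto simp: ascent_bottoms_snoc)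
qed

lemma max_ascent_bottom_eq_last:
  assumes "avoids_010_120 w" "w \<noteq> []" "set w = {1..k}"
  shows "max_ascent_bottom w = last w - 1"
proof -
  obtain p x where w: "w = p @ [x]" using assms(2) by (cases w rule: rev_exhaust) auto
  have x: "x \<in> {1..k}" using assms(3) w by auto
  have "x - 1 \<in> set p" if "x \<ge> 2"
  proof -
    have "x - 1 \<in> set w" using assms(3) x that by auto
    then show ?thesis using that w by auto
  qed
  then have "x \<le> 1 \<or> x - 1 \<in> set p" by linarith
  then show ?thesis using max_ascent_bottom_snoc assms(1) x w by auto
qed

lemma f_words_snoc_iff:
  assumes "p \<in> f_words (Suc n) k" "x \<ge> 1"
  shows "avoids_010_120 (p @ [x]) \<longleftrightarrow> last p \<le> x"
proof -
  have "avoids_010_120 p" "p \<noteq> []" "set p = {1..k}"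
    using assms(1) unfolding f_words_def avoids_010_120_def by auto
  moreover from this have "last p \<ge> 1" using last_in_set by fastforce
  ultimately show ?thesis
    using avoids_010_120_snoc_iff_less[OF assms(2)] max_ascent_bottom_eq_last by fastforce
qed

lemma avoids_010_120_map_iff:
  assumes "strict_mono (g :: nat \<Rightarrow> nat)"
  shows "avoids_010_120 (map g w) \<longleftrightarrow> avoids_010_120 w"
  unfolding avoids_010_120_def avoids010_def avoids120_def
  using assms by (simp add: strict_mono_less strict_mono_eq cong: conj_cong)

lemma ascent_bottoms_map:
  assumes "strict_mono (g :: nat \<Rightarrow> nat)"
  shows "ascent_bottoms (map g w) = g ` ascent_bottoms w"
  unfolding ascent_bottoms_def using assms by (force simp: strict_mono_less)

lemma max_ascent_bottom_map:
  assumes "strict_mono (g :: nat \<Rightarrow> nat)" "g 0 = 0"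
  shows "max_ascent_bottom (map g w) = g (max_ascent_bottom w)"
proof -
  have "max_ascent_bottom (map g w) = Max (g ` insert 0 (ascent_bottoms w))"
    unfolding max_ascent_bottom_def ascent_bottoms_map[OF assms(1)] using assms(2) by simp
  also have "\<dots> = g (max_ascent_bottom w)"
    unfolding max_ascent_bottom_def using assms finite_ascent_bottoms
    by (intro mono_Max_commute[symmetric]) (auto intro: strict_mono_mono)
  finally show ?thesis .
qed

definition lift_above :: "nat \<Rightarrow> nat \<Rightarrow> nat" where
  "lift_above u y = (if u < y then Suc y else y)"

definition lower_above :: "nat \<Rightarrow> nat \<Rightarrow> nat" where
  "lower_above u y = (if u < y then y - 1 else y)"

lemma strict_mono_lift_above: "strict_mono (lift_above u)"
  unfolding strict_mono_def lift_above_def by auto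

lemma lift_above_lower_above: "y \<noteq> Suc u \<Longrightarrow> lift_above u (lower_above (Suc u) y) = y"
  unfolding lift_above_def lower_above_def by auto

lemma lift_above_image: "u < k \<Longrightarrow> lift_above u ` {1..k-1} = {1..k} - {Suc u}"
proof (intro equalityI subsetI)
  fix z assume "u < k" "z \<in> {1..k} - {Suc u}"
  then have "lift_above u (if z \<le> u then z else z - 1) = z" "(if z \<le> u then z else z - 1) \<in> {1..k-1}"
    by (auto simp: lift_above_def)
  then show "z \<in> lift_above u ` {1..k-1}" by (metis image_eqI)
qed (auto simp: lift_above_def)

lemma f_words_lift_snoc_iff:
  assumes "p \<in> f_words (Suc n) (k-1)" "x \<ge> 1"
  shows "avoids_010_120 (map (lift_above (x-1)) p @ [x]) \<longleftrightarrow> last p \<le> x"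
proof -
  have p: "avoids_010_120 p" "p \<noteq> []" "set p = {1..k-1}"
    using assms(1) unfolding f_words_def avoids_010_120_def by auto
  have last: "last p \<ge> 1" using p last_in_set by fastforce
  have "max_ascent_bottom (map (lift_above (x-1)) p) = lift_above (x-1) (last p - 1)"
    using max_ascent_bottom_map[OF strict_mono_lift_above] max_ascent_bottom_eq_last[OF p(1-3)]
    by (simp add: lift_above_def)
  then show ?thesis
    using avoids_010_120_snoc_iff_less[OF assms(2)] p last
      avoids_010_120_map_iff[OF strict_mono_lift_above]
    by (auto simp: lift_above_def)
qed

lemma f_words_altdef:
  "w \<in> f_words n k \<longleftrightarrow> length w = n \<and> set w = {1..k} \<and> avoids_010_120 w"
  unfolding f_words_def avoids_010_120_def by simp

lemma finite_f_words: "finite (f_words n k)"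
proof -
  have "f_words n k \<subseteq> {w. set w \<subseteq> {1..k} \<and> length w = n}" unfolding f_words_def by auto
  then show ?thesis by (rule finite_subset) (simp add: finite_lists_length_eq)
qed

lemma f_words_last_eq_decompose:
  assumes x: "1 \<le> x" "x \<le> k" and w: "w \<in> f_words (Suc (Suc n)) k" "last w = x"
  shows "w \<in> (\<lambda>p. p @ [x]) ` {p \<in> f_words (Suc n) k. last p \<le> x}
    \<union> (\<lambda>p. map (lift_above (x-1)) p @ [x]) ` {p \<in> f_words (Suc n) (k-1). last p \<le> x}"
proof -
  obtain p where wp: "w = p @ [x]"
    using w by (cases w rule: rev_exhaust) (auto simp: f_words_def)
  have p: "length p = Suc n" "set p \<subseteq> {1..k}" "{1..k} - {x} \<subseteq> set p" "avoids_010_120 (p @ [x])"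
    using w unfolding wp f_words_altdef by auto
  show ?thesis
  proof (cases "x \<in> set p")
    case True
    then have "p \<in> f_words (Suc n) k" using p avoids_010_120_snoc unfolding f_words_altdef by auto
    then show ?thesis using f_words_snoc_iff[of p n k x] p(4) x wp by blast
  next
    case False
    define p' where "p' = map (lower_above x) p"
    have "lift_above (x-1) (lower_above x y) = y" if "y \<in> set p" for y
      using lift_above_lower_above[of y "x-1"] that False x by auto
    then have "map (lift_above (x-1) \<circ> lower_above x) p = p" by (intro map_idI) simp
    then have pp': "p = map (lift_above (x-1)) p'" unfolding p'_def by simp
    have "lift_above (x-1) ` set p' = {1..k} - {x}"
      using p False unfolding pp' set_map by blast
    also have "\<dots> = lift_above (x-1) ` {1..k-1}"
      using lift_above_image[of "x-1" k] x by simp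
    finally have "lift_above (x-1) ` set p' = lift_above (x-1) ` {1..k-1}" .
    then have "set p' = {1..k-1}"
      using strict_mono_lift_above strict_mono_imp_inj_on inj_image_eq_iff by metis
    moreover have "avoids_010_120 p'"
      using p(4) avoids_010_120_snoc avoids_010_120_map_iff[OF strict_mono_lift_above] pp' by metis
    ultimately have "p' \<in> f_words (Suc n) (k-1)" using p(1) pp' unfolding f_words_altdef by simp
    then show ?thesis using f_words_lift_snoc_iff[of p' n k x] p(4) x wp pp' by blast
  qed
qed

lemma f_words_last_eq:
  assumes "1 \<le> x" "x \<le> k"
  shows "{w \<in> f_words (Suc (Suc n)) k. last w = x}
    = (\<lambda>p. p @ [x]) ` {p \<in> f_words (Suc n) k. last p \<le> x}
      \<union> (\<lambda>p. map (lift_above (x-1)) p @ [x]) ` {p \<in> f_words (Suc n) (k-1). last p \<le> x}"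
proof (intro equalityI subsetI)
  fix w assume w: "w \<in> {w \<in> f_words (Suc (Suc n)) k. last w = x}"
  show "w \<in> (\<lambda>p. p @ [x]) ` {p \<in> f_words (Suc n) k. last p \<le> x}
      \<union> (\<lambda>p. map (lift_above (x-1)) p @ [x]) ` {p \<in> f_words (Suc n) (k-1). last p \<le> x}"
    by (rule f_words_last_eq_decompose[OF assms]) (use w in simp_all)
next
  fix w assume "w \<in> (\<lambda>p. p @ [x]) ` {p \<in> f_words (Suc n) k. last p \<le> x}
      \<union> (\<lambda>p. map (lift_above (x-1)) p @ [x]) ` {p \<in> f_words (Suc n) (k-1). last p \<le> x}"
  then show "w \<in> {w \<in> f_words (Suc (Suc n)) k. last w = x}"
  proof (elim UnE imageE CollectE conjE)
    fix p assume w: "w = p @ [x]" and p: "p \<in> f_words (Suc n) k" "last p \<le> x"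
    have "avoids_010_120 w" using f_words_snoc_iff[OF p(1) assms(1)] p(2) w by simp
    moreover have "length p = Suc n" "set p = {1..k}" using p(1) unfolding f_words_def by auto
    then have "length w = Suc (Suc n)" "set w = {1..k}" "last w = x"
      using assms w by (simp_all add: insert_absorb)
    ultimately show ?thesis unfolding f_words_altdef by simp
  next
    fix p assume w: "w = map (lift_above (x-1)) p @ [x]" and p: "p \<in> f_words (Suc n) (k-1)" "last p \<le> x"
    have "set (map (lift_above (x-1)) p) = {1..k} - {x}"
      using p lift_above_image[of "x-1" k] assms unfolding f_words_altdef by auto
    then have "set w = {1..k}" using w assms by auto
    moreover have "avoids_010_120 w" using f_words_lift_snoc_iff[OF p(1) assms(1)] p(2) w by simp
    moreover have "length w = Suc (Suc n)" "last w = x" using p(1) w unfolding f_words_def by auto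
    ultimately show ?thesis unfolding f_words_altdef by simp
  qed
qed

lemma card_f_words_last_eq:
  assumes "1 \<le> x" "x \<le> k"
  shows "card {w \<in> f_words (Suc (Suc n)) k. last w = x}
    = card {p \<in> f_words (Suc n) k. last p \<le> x} + card {p \<in> f_words (Suc n) (k-1). last p \<le> x}"
proof -
  let ?A = "{p \<in> f_words (Suc n) k. last p \<le> x}" and ?B = "{p \<in> f_words (Suc n) (k-1). last p \<le> x}"
  have "inj (lift_above (x-1))" using strict_mono_lift_above strict_mono_imp_inj_on by blast
  then have inj: "inj_on (\<lambda>p. p @ [x]) ?A" "inj_on (\<lambda>p. map (lift_above (x-1)) p @ [x]) ?B"
    by (auto simp: inj_on_def inj_map_eq_map)
  have "x \<notin> set (butlast w)" if "w \<in> (\<lambda>p. map (lift_above (x-1)) p @ [x]) ` ?B" for w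
    using that assms by (auto simp: lift_above_def)
  moreover have "x \<in> set (butlast w)" if "w \<in> (\<lambda>p. p @ [x]) ` ?A" for w
    using that assms by (auto simp: f_words_def)
  ultimately have "(\<lambda>p. p @ [x]) ` ?A \<inter> (\<lambda>p. map (lift_above (x-1)) p @ [x]) ` ?B = {}" by blast
  then have "card ((\<lambda>p. p @ [x]) ` ?A \<union> (\<lambda>p. map (lift_above (x-1)) p @ [x]) ` ?B)
      = card ((\<lambda>p. p @ [x]) ` ?A) + card ((\<lambda>p. map (lift_above (x-1)) p @ [x]) ` ?B)"
    by (intro card_Un_disjoint) (simp_all add: finite_f_words)
  then show ?thesis
    unfolding f_words_last_eq[OF assms] card_image[OF inj(1)] card_image[OF inj(2)] .
qed

lemma f_words_Suc_0: "f_words (Suc 0) k = (if k = 1 then {[1]} else {})"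
proof -
  have "w \<in> f_words (Suc 0) k \<longleftrightarrow> k = 1 \<and> w = [1]" for w
  proof
    assume "w \<in> f_words (Suc 0) k"
    then have "length w = 1" "set w = {1..k}" unfolding f_words_def by auto
    then obtain x where x: "w = [x]" by (cases w) auto
    with \<open>set w = {1..k}\<close> have "{1..k} = {x}" by simp
    then show "k = 1 \<and> w = [1]" using x by (simp add: atLeastAtMost_singleton_iff)
  qed (auto simp: f_words_def avoids010_def avoids120_def)
  then show ?thesis by auto
qed

theorem card_f_words: "card (f_words (Suc n) k) = total_count n k"
proof (rule refined_count_family.card_eq_total_count[where stat = "\<lambda>n k w. k + 1 - last w"],
    unfold_locales)
  have last: "1 \<le> last w \<and> last w \<le> k" if "w \<in> f_words (Suc n) k" for n k w
  proof -
    have "w \<noteq> []" "set w = {1..k}" using that unfolding f_words_def by auto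
    then have "last w \<in> {1..k}" by (metis last_in_set)
    then show ?thesis by simp
  qed
  show "1 \<le> k + 1 - last w \<and> k + 1 - last w \<le> k" if "w \<in> f_words (Suc n) k" for n k w
    using last[OF that] by linarith
  show "card {w \<in> f_words (Suc 0) k. k + 1 - last w = s} = refined_count 0 k s" for k s
  proof -
    have "{w \<in> f_words (Suc 0) k. k + 1 - last w = s} = (if k = 1 \<and> s = 1 then {[1]} else {})"
      unfolding f_words_Suc_0 by auto
    then show ?thesis by simp
  qed
  show "card {w \<in> f_words (Suc (Suc n)) k. k + 1 - last w = s}
      = card {w \<in> f_words (Suc n) k. s \<le> k + 1 - last w}
      + card {w \<in> f_words (Suc n) (k-1). s - 1 \<le> k - 1 + 1 - last w}"
    if s: "1 \<le> s" "s \<le> k" for n k s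
  proof -
    have "{w \<in> f_words (Suc (Suc n)) k. k + 1 - last w = s} = {w \<in> f_words (Suc (Suc n)) k. last w = k + 1 - s}"
      using s by (intro Collect_cong conj_cong refl) (auto dest!: last)
    moreover have "{w \<in> f_words (Suc n) k. s \<le> k + 1 - last w} = {w \<in> f_words (Suc n) k. last w \<le> k + 1 - s}"
      using s by (intro Collect_cong conj_cong refl) (auto dest!: last)
    moreover have "{w \<in> f_words (Suc n) (k-1). s - 1 \<le> k - 1 + 1 - last w}
        = {w \<in> f_words (Suc n) (k-1). last w \<le> k + 1 - s}"
      using s by (intro Collect_cong conj_cong refl) (auto dest!: last)
    ultimately show ?thesis using card_f_words_last_eq[of "k + 1 - s" k n] s by simp
  qed
qed (rule finite_f_words)

section \<open>Prefixes and suffixes of sorted lists\<close>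

lemma sorted_take_le_drop:
  assumes "sorted xs" "a \<in> set (take s xs)" "b \<in> set (drop j xs)" "s \<le> j + 1"
  shows "a \<le> (b :: 'a :: linorder)"
proof -
  obtain i where i: "i < length (take s xs)" "a = take s xs ! i" using assms(2) by (auto simp: in_set_conv_nth)
  obtain i' where i': "i' < length (drop j xs)" "b = drop j xs ! i'" using assms(3) by (auto simp: in_set_conv_nth)
  have a: "a = xs ! i" "i < s" using i by auto
  have b: "b = xs ! (j + i')" "j + i' < length xs" using i' by auto
  have "i \<le> j + i'" using a(2) assms(4) by simp
  then show ?thesis using a b sorted_nth_mono[OF assms(1)] by simp
qed

lemma set_take_Un_set_drop: "j \<le> s \<Longrightarrow> set (take s xs) \<union> set (drop j xs) = set xs"
proof -
  assume "j \<le> s"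
  then have "set (take j xs) \<subseteq> set (take s xs)" by (rule set_take_subset_set_take)
  moreover have "set xs = set (take j xs) \<union> set (drop j xs)"
    by (metis append_take_drop_id set_append)
  moreover have "set (take s xs) \<subseteq> set xs" by (rule set_take_subset)
  ultimately show ?thesis by blast
qed

lemma set_drop_eq_diff_take: "distinct xs \<Longrightarrow> set (drop j xs) = set xs - set (take j xs)"
proof -
  assume d: "distinct xs"
  have "set xs = set (take j xs) \<union> set (drop j xs)" by (metis append_take_drop_id set_append)
  moreover have "set (take j xs) \<inter> set (drop j xs) = {}"
    using set_take_disj_set_drop_if_distinct[OF d, of j j] by simp
  ultimately show ?thesis by blast
qed

lemma card_set_take: "distinct xs \<Longrightarrow> card (set (take s xs)) = min s (length xs)"
  by (simp add: distinct_card)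

lemma card_set_drop: "distinct xs \<Longrightarrow> card (set (drop s xs)) = length xs - s"
  by (simp add: distinct_card)

lemma nth_mem_set_take_iff: "distinct xs \<Longrightarrow> i < length xs \<Longrightarrow> xs ! i \<in> set (take s xs) \<longleftrightarrow> i < s"
proof
  assume a: "distinct xs" "i < length xs" "xs ! i \<in> set (take s xs)"
  show "i < s"
  proof (rule ccontr)
    assume "\<not> i < s"
    then have "drop s xs ! (i - s) = xs ! i" "i - s < length (drop s xs)" using a(2) by auto
    then have "xs ! i \<in> set (drop s xs)" by (metis nth_mem)
    then show False using a(3) set_take_disj_set_drop_if_distinct[OF a(1), of s s] by blast
  qed
next
  assume a: "distinct xs" "i < length xs" "i < s"
  then have "take s xs ! i = xs ! i" "i < length (take s xs)" by simp_all
  then show "xs ! i \<in> set (take s xs)" by (metis nth_mem)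
qed

lemma nth_mem_set_drop_iff: "distinct xs \<Longrightarrow> i < length xs \<Longrightarrow> xs ! i \<in> set (drop j xs) \<longleftrightarrow> j \<le> i"
proof -
  assume d: "distinct xs" "i < length xs"
  have "xs ! i \<in> set xs" using d by simp
  then have "xs ! i \<in> set (drop j xs) \<longleftrightarrow> xs ! i \<notin> set (take j xs)" unfolding set_drop_eq_diff_take[OF d(1)] by blast
  moreover have "xs ! i \<in> set (take j xs) \<longleftrightarrow> i < j" by (rule nth_mem_set_take_iff[OF d])
  ultimately show ?thesis by linarith
qed

lemma set_take_card_eq:
  assumes srt: "sorted xs" and d: "distinct xs" and S: "S \<subseteq> set xs"
    and dc: "\<forall>a\<in>S. \<forall>x\<in>set xs - S. a < (x :: 'a :: linorder)"
  shows "set (take (card S) xs) = S"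
proof -
  have finS: "finite S" using S by (rule finite_subset) simp
  have sub: "S \<subseteq> set (take (card S) xs)"
  proof
    fix a assume a: "a \<in> S"
    then have "a \<in> set xs" using S by blast
    then obtain i where i: "i < length xs" "xs ! i = a" by (metis in_set_conv_nth)
    show "a \<in> set (take (card S) xs)"
    proof (rule ccontr)
      assume "a \<notin> set (take (card S) xs)"
      then have ci: "card S \<le> i" using nth_mem_set_take_iff[OF d i(1)] i(2) by simp
      have "set (take (Suc i) xs) \<subseteq> S"
      proof
        fix x assume "x \<in> set (take (Suc i) xs)"
        then obtain i' where i': "i' < Suc i" "i' < length xs" "x = xs ! i'"
          by (auto simp: in_set_conv_nth)
        then have xa: "x \<le> a" using sorted_nth_mono[OF srt, of i' i] i by simp
        have xs: "x \<in> set xs" using i' by simp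
        show "x \<in> S"
        proof (rule ccontr)
          assume "x \<notin> S"
          then have "a < x" using dc a xs by blast
          then show False using xa by simp
        qed
      qed
      then have "card (set (take (Suc i) xs)) \<le> card S" using finS by (rule card_mono[rotated])
      moreover have "card (set (take (Suc i) xs)) = Suc i" using card_set_take[OF d] i by simp
      ultimately show False using ci by simp
    qed
  qed
  moreover have "card (set (take (card S) xs)) \<le> card S"
    using card_set_take[OF d] by simp
  then show ?thesis using card_seteq[OF List.finite_set sub] by simp
qed


section \<open>Dissections of a convex polygon\<close>

lemma mem_diagonals_iff: "(a, b) \<in> diagonals m \<longleftrightarrow> a + 2 \<le> b \<and> b < m \<and> \<not> (a = 0 \<and> b + 1 = m)"
  unfolding diagonals_def by auto

lemma crossing_iff:
  "crossing (a, b) (c, e) \<longleftrightarrow> (a < c \<and> c < b \<and> b < e) \<or> (c < a \<and> a < e \<and> e < b)"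
  unfolding crossing_def by simp

lemma finite_diagonals: "finite (diagonals m)"
  by (rule finite_subset[of _ "{..<m} \<times> {..<m}"]) (auto simp: diagonals_def)

definition is_dissection :: "nat \<Rightarrow> (nat \<times> nat) set \<Rightarrow> bool" where
  "is_dissection m D \<longleftrightarrow> D \<subseteq> diagonals m \<and> (\<forall>d\<in>D. \<forall>e\<in>D. \<not> crossing d e)"

lemma mem_dissections_iff: "D \<in> dissections m k \<longleftrightarrow> is_dissection m D \<and> card D + 1 = k"
  unfolding dissections_def is_dissection_def by simp

lemma finite_dissections: "finite (dissections m k)"
  by (rule finite_subset[of _ "Pow (diagonals m)"]) (auto simp: dissections_def finite_diagonals)

lemma snd_less_if_mem_diagonals: "d \<in> diagonals m \<Longrightarrow> snd d < m"
  by (cases d) (simp add: mem_diagonals_iff)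

lemma finite_dissection: "D \<subseteq> diagonals m \<Longrightarrow> finite D"
  using finite_diagonals finite_subset by blast

(* Diagonals are stored as (u, v) with u < v, so for the last vertex these are all its
   diagonal neighbours. *)
definition lower_nbrs :: "nat \<Rightarrow> (nat \<times> nat) set \<Rightarrow> nat set" where
  "lower_nbrs v D = {u. (u, v) \<in> D}"

definition inner_diags :: "nat \<Rightarrow> (nat \<times> nat) set \<Rightarrow> (nat \<times> nat) set" where
  "inner_diags m D = {d \<in> D. snd d < m - 1}"

lemma card_eq_card_lower_nbrs_add:
  assumes "finite D"
  shows "card D = card {d \<in> D. snd d \<noteq> v} + card (lower_nbrs v D)"
proof -
  let ?A = "{d \<in> D. snd d \<noteq> v}" and ?B = "(\<lambda>u. (u, v)) ` lower_nbrs v D"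
  have "D = ?A \<union> ?B" unfolding lower_nbrs_def by force
  moreover have "?B \<subseteq> D" unfolding lower_nbrs_def by auto
  then have "card (?A \<union> ?B) = card ?A + card ?B"
    using assms finite_subset by (intro card_Un_disjoint) auto
  moreover have "card ?B = card (lower_nbrs v D)" by (simp add: card_image inj_on_def)
  ultimately show ?thesis by simp
qed

lemma lower_nbrs_subset:
  assumes "D \<subseteq> diagonals m" shows "lower_nbrs v D \<subseteq> {..v-2}"
proof
  fix u assume "u \<in> lower_nbrs v D"
  then have "(u, v) \<in> diagonals m" using assms unfolding lower_nbrs_def by auto
  then show "u \<in> {..v-2}" by (auto simp: mem_diagonals_iff)
qed

lemma lower_nbrs_last_subset:
  assumes "D \<subseteq> diagonals m" shows "lower_nbrs (m - 1) D \<subseteq> {1..m-3}"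
proof
  fix u assume "u \<in> lower_nbrs (m - 1) D"
  then have "(u, m - 1) \<in> diagonals m" using assms unfolding lower_nbrs_def by auto
  then show "u \<in> {1..m-3}" by (auto simp: mem_diagonals_iff)
qed

lemma finite_lower_nbrs: "D \<subseteq> diagonals m \<Longrightarrow> finite (lower_nbrs v D)"
  by (rule finite_subset[OF lower_nbrs_subset]) simp_all

lemma inner_diags_eq_filter:
  assumes "\<And>d. d \<in> D \<Longrightarrow> snd d < m"
  shows "inner_diags m D = {d \<in> D. snd d \<noteq> m - 1}"
  unfolding inner_diags_def by (intro Collect_cong conj_cong refl) (auto dest!: assms)

lemma card_eq_card_inner_diags_add:
  assumes "D \<subseteq> diagonals m"
  shows "card D = card (inner_diags m D) + card (lower_nbrs (m - 1) D)"
proof -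
  have "inner_diags m D = {d \<in> D. snd d \<noteq> m - 1}"
    using assms snd_less_if_mem_diagonals by (intro inner_diags_eq_filter) blast
  then show ?thesis using card_eq_card_lower_nbrs_add[OF finite_dissection[OF assms]] by simp
qed

(* The number of regions incident to the last vertex m - 1. *)
definition regions_at_last :: "nat \<Rightarrow> (nat \<times> nat) set \<Rightarrow> nat" where
  "regions_at_last m D = card (lower_nbrs (m - 1) D) + 1"

lemma regions_at_last_le: "D \<subseteq> diagonals m \<Longrightarrow> regions_at_last m D \<le> card D + 1"
  unfolding regions_at_last_def using card_eq_card_inner_diags_add by fastforce

(* The neighbours of the last vertex m - 1 along sides and diagonals. *)
definition fan :: "nat \<Rightarrow> (nat \<times> nat) set \<Rightarrow> nat set" where
  "fan m D = insert 0 (insert (m - 2) (lower_nbrs (m - 1) D))"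

definition fan_list :: "nat \<Rightarrow> (nat \<times> nat) set \<Rightarrow> nat list" where
  "fan_list m D = sorted_list_of_set (fan m D)"

context
  fixes m :: nat and D :: "(nat \<times> nat) set"
  assumes m: "3 \<le> m" and D: "D \<subseteq> diagonals m"
begin

lemma fan_subset: "fan m D \<subseteq> {..m-2}"
proof
  fix u assume "u \<in> fan m D"
  then have "u = 0 \<or> u = m - 2 \<or> u \<in> {1..m-3}"
    using lower_nbrs_last_subset[OF D] unfolding fan_def by blast
  then show "u \<in> {..m-2}" by auto
qed

lemma finite_fan: "finite (fan m D)"
  by (rule finite_subset[OF fan_subset]) simp

lemma card_fan: "card (fan m D) = regions_at_last m D + 1"
proof -
  have "0 \<notin> {1..m-3}" "m - 2 \<notin> {1..m-3}" using m by auto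
  then have "0 \<notin> lower_nbrs (m - 1) D" "m - 2 \<notin> lower_nbrs (m - 1) D"
    using lower_nbrs_last_subset[OF D] by blast+
  then show ?thesis
    unfolding fan_def regions_at_last_def using m finite_lower_nbrs[OF D] by simp
qed

lemma fan_list:
  "sorted (fan_list m D)" "distinct (fan_list m D)" "set (fan_list m D) = fan m D"
  "length (fan_list m D) = regions_at_last m D + 1"
  unfolding fan_list_def using finite_fan card_fan by simp_all

lemma zero_mem_take_fan_list: "1 \<le> s \<Longrightarrow> 0 \<in> set (take s (fan_list m D))"
proof -
  assume "1 \<le> s"
  moreover have "Min (fan m D) = 0" using finite_fan by (simp add: fan_def)
  ultimately show ?thesis
    unfolding fan_list_def using finite_fan
    by (cases s) (simp_all add: sorted_list_of_set_nonempty fan_def)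
qed

lemma top_mem_drop_fan_list:
  assumes "j < length (fan_list m D)"
  shows "m - 2 \<in> set (drop j (fan_list m D))"
proof (rule ccontr)
  let ?L = "fan_list m D"
  assume "m - 2 \<notin> set (drop j ?L)"
  then have "m - 2 \<in> set (take j ?L)"
    using fan_list(3) by (metis Un_iff append_take_drop_id fan_def insertCI set_append)
  moreover have "?L ! j \<in> set (drop j ?L)" using assms by (simp add: in_set_conv_nth exI[of _ 0])
  ultimately have "m - 2 \<le> ?L ! j" "?L ! j \<le> m - 2"
    using sorted_take_le_drop[OF fan_list(1)] fan_subset fan_list(3) assms by auto
  then show False
    using \<open>m - 2 \<in> set (take j ?L)\<close> nth_mem_set_take_iff[OF fan_list(2) assms] by simp
qed

end

lemma inner_diag_not_around_fan:
  assumes D: "is_dissection m D" and d: "(a, b) \<in> inner_diags m D" and u: "u \<in> fan m D"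
  shows "\<not> (a < u \<and> u < b)"
proof
  assume au: "a < u \<and> u < b"
  have "b < m - 1" "(a, b) \<in> D" using d unfolding inner_diags_def by auto
  moreover have "u \<in> lower_nbrs (m - 1) D" using u au \<open>b < m - 1\<close> unfolding fan_def by auto
  ultimately show False
    using D au unfolding is_dissection_def lower_nbrs_def by (force simp: crossing_iff)
qed

lemma card_Suc_eq_card_inner_diags_add:
  assumes "D \<subseteq> diagonals (Suc m)" "1 \<le> m"
  shows "card D = card (inner_diags m D) + card (lower_nbrs m D) + card (lower_nbrs (m - 1) D)"
proof -
  let ?D = "{d \<in> D. snd d \<noteq> m}"
  have "finite D" using finite_dissection[OF assms(1)] .
  then have "card D = card ?D + card (lower_nbrs m D)" "finite ?D"
    using card_eq_card_lower_nbrs_add by auto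
  moreover have "card ?D = card {d \<in> ?D. snd d \<noteq> m - 1} + card (lower_nbrs (m - 1) ?D)"
    using card_eq_card_lower_nbrs_add[OF \<open>finite ?D\<close>] .
  moreover have "{d \<in> ?D. snd d \<noteq> m - 1} = inner_diags m D"
  proof -
    have "snd d < m" if "d \<in> ?D" for d
      using that assms(1) snd_less_if_mem_diagonals[of d "Suc m"] by auto
    then show ?thesis using inner_diags_eq_filter[of ?D m] unfolding inner_diags_def by auto
  qed
  moreover have "lower_nbrs (m - 1) ?D = lower_nbrs (m - 1) D"
    using assms(2) unfolding lower_nbrs_def by auto
  ultimately show ?thesis by simp
qed

(* A new vertex m is inserted between m - 1 and 0. The first s vertices of the fan of m - 1 are
   joined to m instead, the fan vertices from position j on stay joined to m - 1; for
   j = s - 1 the two share one vertex, which closes a triangle on the new side (m - 1, m). *)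
definition extend :: "nat \<Rightarrow> nat \<Rightarrow> nat \<Rightarrow> (nat \<times> nat) set \<Rightarrow> (nat \<times> nat) set" where
  "extend m s j D = inner_diags m D \<union> (\<lambda>u. (u, m)) ` (set (take s (fan_list m D)) - {0})
    \<union> (\<lambda>u. (u, m - 1)) ` (set (drop j (fan_list m D)) - {m - 2})"

(* The side joining the last two vertices m - 1 and m of the (m + 1)-gon lies on a triangle. *)
definition last_triangle :: "nat \<Rightarrow> (nat \<times> nat) set \<Rightarrow> bool" where
  "last_triangle m D \<longleftrightarrow> insert 0 (lower_nbrs m D) \<inter> insert (m - 2) (lower_nbrs (m - 1) D) \<noteq> {}"

lemma inner_diags_extend: "inner_diags m (extend m s j D) = inner_diags m D"
  unfolding extend_def inner_diags_def by auto

lemma lower_nbrs_extend_new: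
  assumes "1 \<le> m"
  shows "lower_nbrs m (extend m s j D) = set (take s (fan_list m D)) - {0}"
  using assms unfolding extend_def inner_diags_def lower_nbrs_def by auto

lemma lower_nbrs_extend_last:
  assumes "1 \<le> m"
  shows "lower_nbrs (m - 1) (extend m s j D) = set (drop j (fan_list m D)) - {m - 2}"
  using assms unfolding extend_def inner_diags_def lower_nbrs_def by auto

context
  fixes m s j :: nat and D :: "(nat \<times> nat) set"
  assumes m: "3 \<le> m" and D: "is_dissection m D"
    and s: "1 \<le> s" "s \<le> j + 1" and j: "j < length (fan_list m D)"
begin

lemma extend_cases:
  assumes "d \<in> extend m s j D"
  obtains "d \<in> inner_diags m D"
    | u where "u \<in> fan m D" "u \<noteq> 0" "u \<in> set (take s (fan_list m D))" "d = (u, m)"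
    | u where "u \<in> fan m D" "u \<noteq> m - 2" "u \<in> set (drop j (fan_list m D))" "d = (u, m - 1)"
proof -
  have "set (fan_list m D) = fan m D" using D m unfolding is_dissection_def by (simp add: fan_list)
  then show ?thesis using assms that unfolding extend_def by (blast dest: in_set_takeD in_set_dropD)
qed

lemma extend_subset_diagonals: "extend m s j D \<subseteq> diagonals (Suc m)"
proof
  fix d assume d: "d \<in> extend m s j D"
  have "D \<subseteq> diagonals m" using D unfolding is_dissection_def by simp
  then have fan_le: "u \<le> m - 2" if "u \<in> fan m D" for u
    using fan_subset[OF m] that by (meson atMost_iff subsetD)
  from d show "d \<in> diagonals (Suc m)"
  proof (cases rule: extend_cases)
    case 1
    then have "d \<in> diagonals m" "snd d < m - 1"
      using \<open>D \<subseteq> diagonals m\<close> unfolding inner_diags_def by blast+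
    then show ?thesis by (cases d) (auto simp: mem_diagonals_iff)
  next
    case (2 u)
    then show ?thesis using fan_le[of u] m by (auto simp: mem_diagonals_iff)
  next
    case (3 u)
    then show ?thesis using fan_le[of u] m by (auto simp: mem_diagonals_iff)
  qed
qed

lemma is_dissection_extend: "is_dissection (Suc m) (extend m s j D)"
proof -
  have "D \<subseteq> diagonals m" using D unfolding is_dissection_def by simp
  have new_last: "u \<le> v" if "u \<in> set (take s (fan_list m D))" "v \<in> set (drop j (fan_list m D))" for u v
    using sorted_take_le_drop[OF fan_list(1)[OF m \<open>D \<subseteq> diagonals m\<close>] that s(2)] .
  have inner: "\<not> crossing d e" if "d \<in> inner_diags m D" "e \<in> inner_diags m D" for d e
    using that D unfolding inner_diags_def is_dissection_def by blast
  have inner_fan: "\<not> crossing d (u, v) \<and> \<not> crossing (u, v) d"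
    if "d \<in> inner_diags m D" "u \<in> fan m D" "v \<in> {m - 1, m}" for d u v
    using that inner_diag_not_around_fan[OF D, of "fst d" "snd d" u]
    unfolding inner_diags_def by (cases d) (auto simp: crossing_iff)
  have same_end: "\<not> crossing (u, v) (u', v)" for u u' v :: nat
    by (simp add: crossing_iff)
  have new_last_cross: "\<not> crossing (u, m) (v, m - 1) \<and> \<not> crossing (v, m - 1) (u, m)"
    if "u \<in> set (take s (fan_list m D))" "v \<in> set (drop j (fan_list m D))" for u v
    using new_last[OF that] by (auto simp: crossing_iff)
  have "\<not> crossing d e" if d: "d \<in> extend m s j D" and e: "e \<in> extend m s j D" for d e
    using d
  proof (cases rule: extend_cases)
    case 1
    from e show ?thesis by (cases rule: extend_cases) (use 1 inner inner_fan in blast)+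
  next
    case 2
    from e show ?thesis by (cases rule: extend_cases) (use 2 inner_fan same_end new_last_cross in blast)+
  next
    case 3
    from e show ?thesis by (cases rule: extend_cases) (use 3 inner_fan same_end new_last_cross in blast)+
  qed
  then show ?thesis using extend_subset_diagonals unfolding is_dissection_def by blast
qed

lemma card_take_fan_list_diff_0: "card (set (take s (fan_list m D)) - {0}) = s - 1"
proof -
  have "D \<subseteq> diagonals m" using D unfolding is_dissection_def by simp
  then have "card (set (take s (fan_list m D))) = s"
    using card_set_take[OF fan_list(2)[OF m]] s j by simp
  then show ?thesis using zero_mem_take_fan_list[OF m \<open>D \<subseteq> diagonals m\<close> s(1)] by simp
qed

lemma regions_at_last_extend: "regions_at_last (Suc m) (extend m s j D) = s"
  unfolding regions_at_last_def using lower_nbrs_extend_new[of m s j D] card_take_fan_list_diff_0 m s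
  by simp

lemma card_extend: "card (extend m s j D) + j = card D + s"
proof -
  have "D \<subseteq> diagonals m" using D unfolding is_dissection_def by simp
  note L = fan_list[OF m this]
  have "card (set (drop j (fan_list m D)) - {m - 2}) = length (fan_list m D) - j - 1"
    using card_set_drop[OF L(2)] top_mem_drop_fan_list[OF m \<open>D \<subseteq> diagonals m\<close> j] by simp
  moreover have "extend m s j D \<subseteq> diagonals (Suc m)" by (rule extend_subset_diagonals)
  then have "card (extend m s j D) = card (inner_diags m D) + (s - 1)
      + card (set (drop j (fan_list m D)) - {m - 2})"
    using card_Suc_eq_card_inner_diags_add[of "extend m s j D" m] m inner_diags_extend[of m s j D]
      lower_nbrs_extend_new[of m s j D] lower_nbrs_extend_last[of m s j D] card_take_fan_list_diff_0
    by simp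
  moreover have "card D = card (inner_diags m D) + (length (fan_list m D) - 2)"
    using card_eq_card_inner_diags_add[OF \<open>D \<subseteq> diagonals m\<close>] L(4) unfolding regions_at_last_def by simp
  moreover have "regions_at_last m D \<ge> 1" unfolding regions_at_last_def by simp
  ultimately show ?thesis using s j L(4) by simp
qed

lemma last_triangle_extend_iff: "last_triangle m (extend m s j D) \<longleftrightarrow> j < s"
proof -
  have "D \<subseteq> diagonals m" using D unfolding is_dissection_def by simp
  note L = fan_list[OF m this]
  have "insert 0 (lower_nbrs m (extend m s j D)) = set (take s (fan_list m D))"
    "insert (m - 2) (lower_nbrs (m - 1) (extend m s j D)) = set (drop j (fan_list m D))"
    using lower_nbrs_extend_new[of m s j D] lower_nbrs_extend_last[of m s j D] m
      zero_mem_take_fan_list[OF m \<open>D \<subseteq> diagonals m\<close> s(1)]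
      top_mem_drop_fan_list[OF m \<open>D \<subseteq> diagonals m\<close> j] by auto
  moreover have "set (take s (fan_list m D)) \<inter> set (drop j (fan_list m D)) \<noteq> {} \<longleftrightarrow> j < s"
  proof
    assume "j < s"
    then have "fan_list m D ! j \<in> set (take s (fan_list m D)) \<inter> set (drop j (fan_list m D))"
      using nth_mem_set_take_iff[OF L(2) j] nth_mem_set_drop_iff[OF L(2) j] by simp
    then show "set (take s (fan_list m D)) \<inter> set (drop j (fan_list m D)) \<noteq> {}" by blast
  next
    assume "set (take s (fan_list m D)) \<inter> set (drop j (fan_list m D)) \<noteq> {}"
    then show "j < s" using set_take_disj_set_drop_if_distinct[OF L(2), of s j] by (cases "s \<le> j") auto
  qed
  ultimately show ?thesis unfolding last_triangle_def by simp
qed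

end

lemma dissection_eq_inner_Un_last:
  assumes "D \<subseteq> diagonals m"
  shows "D = inner_diags m D \<union> (\<lambda>u. (u, m - 1)) ` lower_nbrs (m - 1) D"
proof (intro equalityI subsetI)
  fix d assume "d \<in> D"
  moreover from this have "snd d < m" using assms snd_less_if_mem_diagonals by blast
  moreover have "d \<in> (\<lambda>u. (u, m - 1)) ` lower_nbrs (m - 1) D" if "snd d = m - 1"
    using that \<open>d \<in> D\<close> unfolding lower_nbrs_def by (cases d) auto
  ultimately show "d \<in> inner_diags m D \<union> (\<lambda>u. (u, m - 1)) ` lower_nbrs (m - 1) D"
    unfolding inner_diags_def by (cases "snd d = m - 1") auto
qed (auto simp: inner_diags_def lower_nbrs_def)

(* Merges the last vertex m of the (m + 1)-gon into m - 1: the inverse of extend. *)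
definition contract :: "nat \<Rightarrow> (nat \<times> nat) set \<Rightarrow> (nat \<times> nat) set" where
  "contract m D = inner_diags m D
    \<union> (\<lambda>u. (u, m - 1)) ` ((lower_nbrs m D \<union> lower_nbrs (m - 1) D) - {0, m - 2})"

lemma contract_extend:
  assumes m: "3 \<le> m" and D: "is_dissection m D"
    and s: "1 \<le> s" "j \<le> s" and j: "j < length (fan_list m D)"
  shows "contract m (extend m s j D) = D"
proof -
  have "D \<subseteq> diagonals m" using D unfolding is_dissection_def by simp
  note L = fan_list[OF m this]
  have "0 \<notin> {1..m-3}" "m - 2 \<notin> {1..m-3}" using m by auto
  then have "0 \<notin> lower_nbrs (m - 1) D" "m - 2 \<notin> lower_nbrs (m - 1) D"
    using lower_nbrs_last_subset[OF \<open>D \<subseteq> diagonals m\<close>] by blast+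
  moreover have "set (take s (fan_list m D)) \<union> set (drop j (fan_list m D)) = fan m D"
    unfolding set_take_Un_set_drop[OF s(2)] L(3) ..
  ultimately have "(lower_nbrs m (extend m s j D) \<union> lower_nbrs (m - 1) (extend m s j D)) - {0, m - 2}
      = lower_nbrs (m - 1) D"
    using lower_nbrs_extend_new[of m s j D] lower_nbrs_extend_last[of m s j D] m
    unfolding fan_def by auto
  then show ?thesis
    unfolding contract_def inner_diags_extend
    using dissection_eq_inner_Un_last[OF \<open>D \<subseteq> diagonals m\<close>] by simp
qed

context
  fixes m :: nat and D :: "(nat \<times> nat) set"
  assumes m: "3 \<le> m" and D: "is_dissection (Suc m) D"
begin

lemma subset_diagonals_Suc: "D \<subseteq> diagonals (Suc m)"
  using D unfolding is_dissection_def by simp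

lemma lower_nbrs_new_range:
  assumes "u \<in> lower_nbrs m D" shows "1 \<le> u \<and> u \<le> m - 2"
proof -
  have "(u, m) \<in> diagonals (Suc m)" using assms subset_diagonals_Suc unfolding lower_nbrs_def by blast
  then show ?thesis by (auto simp: mem_diagonals_iff)
qed

lemma lower_nbrs_last_range:
  assumes "u \<in> lower_nbrs (m - 1) D" shows "u \<le> m - 3"
proof -
  have "(u, m - 1) \<in> diagonals (Suc m)" using assms subset_diagonals_Suc unfolding lower_nbrs_def by blast
  then show ?thesis by (auto simp: mem_diagonals_iff)
qed

lemma new_le_last:
  assumes "a \<in> insert 0 (lower_nbrs m D)" "b \<in> insert (m - 2) (lower_nbrs (m - 1) D)"
  shows "a \<le> b"
proof (rule ccontr)
  assume "\<not> a \<le> b"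
  then have "a \<in> lower_nbrs m D" "b \<in> lower_nbrs (m - 1) D" "b < a"
    using assms lower_nbrs_new_range by auto
  moreover have "a < m - 1" using lower_nbrs_new_range[OF \<open>a \<in> lower_nbrs m D\<close>] m by linarith
  ultimately have "crossing (a, m) (b, m - 1)" "(a, m) \<in> D" "(b, m - 1) \<in> D"
    using m unfolding lower_nbrs_def by (auto simp: crossing_iff)
  then show False using D unfolding is_dissection_def by blast
qed

lemma dissection_Suc_eq:
  "D = inner_diags m D \<union> (\<lambda>u. (u, m)) ` lower_nbrs m D \<union> (\<lambda>u. (u, m - 1)) ` lower_nbrs (m - 1) D"
proof (intro equalityI subsetI)
  fix d assume "d \<in> D"
  moreover from this have "snd d < Suc m" using subset_diagonals_Suc snd_less_if_mem_diagonals by blast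
  then consider "snd d < m - 1" | "snd d = m - 1" | "snd d = m" by linarith
  ultimately show "d \<in> inner_diags m D \<union> (\<lambda>u. (u, m)) ` lower_nbrs m D
      \<union> (\<lambda>u. (u, m - 1)) ` lower_nbrs (m - 1) D"
    unfolding inner_diags_def lower_nbrs_def by cases (cases d, force)+
qed (auto simp: inner_diags_def lower_nbrs_def)

lemma lower_nbrs_contract:
  "lower_nbrs (m - 1) (contract m D) = (lower_nbrs m D \<union> lower_nbrs (m - 1) D) - {0, m - 2}"
  unfolding contract_def inner_diags_def lower_nbrs_def by auto

lemma inner_diags_contract: "inner_diags m (contract m D) = inner_diags m D"
  unfolding contract_def inner_diags_def by auto

lemma is_dissection_contract: "is_dissection m (contract m D)"
proof -
  let ?V = "(lower_nbrs m D \<union> lower_nbrs (m - 1) D) - {0, m - 2}"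
  have V: "1 \<le> u \<and> u \<le> m - 3" if "u \<in> ?V" for u
    using that lower_nbrs_new_range lower_nbrs_last_range by fastforce
  have inner: "d \<in> D" "snd d < m - 1" if "d \<in> inner_diags m D" for d
    using that unfolding inner_diags_def by auto
  have "contract m D \<subseteq> diagonals m"
  proof
    fix d assume "d \<in> contract m D"
    then consider "d \<in> inner_diags m D" | u where "u \<in> ?V" "d = (u, m - 1)"
      unfolding contract_def by blast
    then show "d \<in> diagonals m"
    proof cases
      case 1
      then have "d \<in> diagonals (Suc m)" "snd d < m - 1"
        using inner subset_diagonals_Suc by blast+
      then show ?thesis by (cases d) (auto simp: mem_diagonals_iff)
    next
      case 2
      then show ?thesis using V[of u] m by (auto simp: mem_diagonals_iff)
    qed
  qed
  moreover have "\<not> crossing d e" if "d \<in> contract m D" "e \<in> contract m D" for d e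
  proof -
    have inner_V: "\<not> crossing d (u, m - 1) \<and> \<not> crossing (u, m - 1) d"
      if d_inner: "d \<in> inner_diags m D" and u: "u \<in> ?V" for d u
    proof -
      obtain a b where d: "d = (a, b)" "(a, b) \<in> D" "b < m - 1"
        using inner(1,2)[OF d_inner] by (cases d) auto
      obtain v where v: "(u, v) \<in> D" "v \<in> {m - 1, m}" using u unfolding lower_nbrs_def by blast
      then have "\<not> crossing (a, b) (u, v)" using D d(2) unfolding is_dissection_def by blast
      then have "\<not> (a < u \<and> u < b)" using v(2) d(3) by (auto simp: crossing_iff)
      then show ?thesis using d(1,3) by (auto simp: crossing_iff)
    qed
    have "\<not> crossing d e" if "d \<in> inner_diags m D" "e \<in> inner_diags m D" for d e
      using that inner D unfolding is_dissection_def by blast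
    moreover have "\<not> crossing (u, m - 1) (v, m - 1)" for u v :: nat by (simp add: crossing_iff)
    ultimately show ?thesis
      using that inner_V unfolding contract_def by blast
  qed
  ultimately show ?thesis unfolding is_dissection_def by blast
qed

lemma fan_contract:
  "fan m (contract m D) = insert 0 (lower_nbrs m D) \<union> insert (m - 2) (lower_nbrs (m - 1) D)"
  unfolding fan_def lower_nbrs_contract by auto

lemma zero_notin_lower_nbrs_new: "0 \<notin> lower_nbrs m D"
  using lower_nbrs_new_range by fastforce

lemma top_notin_lower_nbrs_last: "m - 2 \<notin> lower_nbrs (m - 1) D"
  using lower_nbrs_last_range m by fastforce

lemma finite_lower_nbrs_Suc: "finite (lower_nbrs v D)"
  using finite_lower_nbrs[OF subset_diagonals_Suc] .

lemma set_take_fan_list_contract: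
  assumes "S \<subseteq> insert 0 (lower_nbrs m D)"
    and "insert 0 (lower_nbrs m D) - S \<subseteq> insert (m - 2) (lower_nbrs (m - 1) D)"
  shows "set (take (card S) (fan_list m (contract m D))) = S"
proof -
  have P: "contract m D \<subseteq> diagonals m" using is_dissection_contract unfolding is_dissection_def by simp
  note L = fan_list[OF m P]
  show ?thesis
  proof (rule set_take_card_eq[OF L(1,2)])
    show "S \<subseteq> set (fan_list m (contract m D))" using assms(1) unfolding L(3) fan_contract by blast
    show "\<forall>a\<in>S. \<forall>x\<in>set (fan_list m (contract m D)) - S. a < x"
    proof (intro ballI)
      fix a x assume a: "a \<in> S" and x: "x \<in> set (fan_list m (contract m D)) - S"
      then have "x \<in> insert (m - 2) (lower_nbrs (m - 1) D)"
        using assms(2) unfolding L(3) fan_contract by blast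
      moreover have "a \<in> insert 0 (lower_nbrs m D)" "a \<noteq> x" using a x assms(1) by blast+
      ultimately show "a < x" using new_le_last[of a x] by simp
    qed
  qed
qed

lemma regions_at_last_Suc: "regions_at_last (Suc m) D = card (lower_nbrs m D) + 1"
  unfolding regions_at_last_def by simp

lemma extend_contract:
  assumes "set (take s (fan_list m (contract m D))) = insert 0 (lower_nbrs m D)"
    and "set (drop j (fan_list m (contract m D))) = insert (m - 2) (lower_nbrs (m - 1) D)"
  shows "extend m s j (contract m D) = D"
proof -
  have "set (take s (fan_list m (contract m D))) - {0} = lower_nbrs m D"
    "set (drop j (fan_list m (contract m D))) - {m - 2} = lower_nbrs (m - 1) D"
    unfolding assms using zero_notin_lower_nbrs_new top_notin_lower_nbrs_last by auto
  then show ?thesis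
    unfolding extend_def inner_diags_contract using dissection_Suc_eq by simp
qed

lemma regions_at_last_contract_add:
  "regions_at_last m (contract m D)
    + card (insert 0 (lower_nbrs m D) \<inter> insert (m - 2) (lower_nbrs (m - 1) D))
    = card (lower_nbrs m D) + card (lower_nbrs (m - 1) D) + 1"
proof -
  let ?A = "insert 0 (lower_nbrs m D)" and ?B = "insert (m - 2) (lower_nbrs (m - 1) D)"
  have P: "contract m D \<subseteq> diagonals m" using is_dissection_contract unfolding is_dissection_def by simp
  have "card (?A \<union> ?B) + card (?A \<inter> ?B) = card ?A + card ?B"
    using finite_lower_nbrs_Suc by (intro card_Un_Int[symmetric]) auto
  moreover have "card ?A = card (lower_nbrs m D) + 1" "card ?B = card (lower_nbrs (m - 1) D) + 1"
    using zero_notin_lower_nbrs_new top_notin_lower_nbrs_last finite_lower_nbrs_Suc by simp_all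
  moreover have "card (?A \<union> ?B) = regions_at_last m (contract m D) + 1"
    using card_fan[OF m P] fan_contract by simp
  ultimately show ?thesis by linarith
qed

lemma card_contract_add:
  "card (contract m D) + card (insert 0 (lower_nbrs m D) \<inter> insert (m - 2) (lower_nbrs (m - 1) D))
    = card D"
proof -
  have P: "contract m D \<subseteq> diagonals m" using is_dissection_contract unfolding is_dissection_def by simp
  have "card (contract m D) = card (inner_diags m D) + (regions_at_last m (contract m D) - 1)"
    using card_eq_card_inner_diags_add[OF P] inner_diags_contract unfolding regions_at_last_def by simp
  moreover have "card D = card (inner_diags m D) + card (lower_nbrs m D) + card (lower_nbrs (m - 1) D)"
    using card_Suc_eq_card_inner_diags_add[OF subset_diagonals_Suc] m by simp
  moreover have "regions_at_last m (contract m D) \<ge> 1" unfolding regions_at_last_def by simp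
  ultimately show ?thesis using regions_at_last_contract_add by linarith
qed

lemma contract_no_last_triangle:
  assumes "\<not> last_triangle m D"
  shows "card (contract m D) = card D"
    "regions_at_last (Suc m) D \<le> regions_at_last m (contract m D)"
    "extend m (regions_at_last (Suc m) D) (regions_at_last (Suc m) D) (contract m D) = D"
proof -
  let ?A = "insert 0 (lower_nbrs m D)" and ?B = "insert (m - 2) (lower_nbrs (m - 1) D)"
  have disj: "?A \<inter> ?B = {}" using assms unfolding last_triangle_def by simp
  then show "card (contract m D) = card D"
    "regions_at_last (Suc m) D \<le> regions_at_last m (contract m D)"
    using card_contract_add regions_at_last_contract_add unfolding regions_at_last_Suc by simp_all
  have P: "contract m D \<subseteq> diagonals m" using is_dissection_contract unfolding is_dissection_def by simp
  have "card ?A = regions_at_last (Suc m) D"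
    unfolding regions_at_last_Suc using zero_notin_lower_nbrs_new finite_lower_nbrs_Suc by simp
  moreover have take: "set (take (card ?A) (fan_list m (contract m D))) = ?A"
    by (rule set_take_fan_list_contract) auto
  moreover have "set (drop (card ?A) (fan_list m (contract m D))) = ?B"
    unfolding set_drop_eq_diff_take[OF fan_list(2)[OF m P]] take fan_list(3)[OF m P] fan_contract
    using disj by blast
  ultimately show "extend m (regions_at_last (Suc m) D) (regions_at_last (Suc m) D) (contract m D) = D"
    using extend_contract by simp
qed

lemma contract_last_triangle:
  assumes "last_triangle m D"
  shows "card (contract m D) + 1 = card D"
    "regions_at_last (Suc m) D - 1 \<le> regions_at_last m (contract m D)"
    "extend m (regions_at_last (Suc m) D) (regions_at_last (Suc m) D - 1) (contract m D) = D"
proof -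
  let ?A = "insert 0 (lower_nbrs m D)" and ?B = "insert (m - 2) (lower_nbrs (m - 1) D)"
  obtain c where c: "c \<in> ?A" "c \<in> ?B" using assms unfolding last_triangle_def by blast
  have AB: "?A \<inter> ?B = {c}"
    using new_le_last c by (intro equalityI subsetI) (auto intro: antisym)
  then show "card (contract m D) + 1 = card D"
    "regions_at_last (Suc m) D - 1 \<le> regions_at_last m (contract m D)"
    using card_contract_add regions_at_last_contract_add unfolding regions_at_last_Suc by simp_all
  have P: "contract m D \<subseteq> diagonals m" using is_dissection_contract unfolding is_dissection_def by simp
  have "card (?A - {c}) = regions_at_last (Suc m) D - 1"
    unfolding regions_at_last_Suc using c(1) zero_notin_lower_nbrs_new finite_lower_nbrs_Suc by simp
  moreover have take: "set (take (card (?A - {c})) (fan_list m (contract m D))) = ?A - {c}"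
    using c by (intro set_take_fan_list_contract) auto
  moreover have "set (take (regions_at_last (Suc m) D) (fan_list m (contract m D))) = ?A"
    unfolding regions_at_last_Suc
    using set_take_fan_list_contract[of ?A] zero_notin_lower_nbrs_new finite_lower_nbrs_Suc c by simp
  moreover have "set (drop (card (?A - {c})) (fan_list m (contract m D))) = ?B"
    unfolding set_drop_eq_diff_take[OF fan_list(2)[OF m P]] take fan_list(3)[OF m P] fan_contract
    using AB by blast
  ultimately show "extend m (regions_at_last (Suc m) D) (regions_at_last (Suc m) D - 1) (contract m D) = D"
    using extend_contract by simp
qed

end

lemma dissections_regions_at_last_eq:
  assumes m: "3 \<le> m" and s: "1 \<le> s"
  shows "{D \<in> dissections (Suc m) k. regions_at_last (Suc m) D = s}
    = extend m s s ` {D \<in> dissections m k. s \<le> regions_at_last m D}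
      \<union> extend m s (s - 1) ` {D \<in> dissections m (k - 1). s - 1 \<le> regions_at_last m D}"
proof (intro equalityI subsetI)
  fix D assume "D \<in> {D \<in> dissections (Suc m) k. regions_at_last (Suc m) D = s}"
  then have D: "is_dissection (Suc m) D" "card D + 1 = k" "regions_at_last (Suc m) D = s"
    unfolding mem_dissections_iff by auto
  note P = is_dissection_contract[OF m D(1)]
  show "D \<in> extend m s s ` {D \<in> dissections m k. s \<le> regions_at_last m D}
      \<union> extend m s (s - 1) ` {D \<in> dissections m (k - 1). s - 1 \<le> regions_at_last m D}"
  proof (cases "last_triangle m D")
    case False
    note P' = contract_no_last_triangle[OF m D(1) False, unfolded D(3)]
    have "contract m D \<in> {D \<in> dissections m k. s \<le> regions_at_last m D}"
      using P P'(1,2) D(2) unfolding mem_dissections_iff by simp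
    then show ?thesis using P'(3) by (blast intro: rev_image_eqI)
  next
    case True
    note P' = contract_last_triangle[OF m D(1) True, unfolded D(3)]
    have "contract m D \<in> {D \<in> dissections m (k - 1). s - 1 \<le> regions_at_last m D}"
      using P P'(1,2) D(2) unfolding mem_dissections_iff by simp
    then show ?thesis using P'(3) by (blast intro: rev_image_eqI)
  qed
next
  have ext: "extend m s j D \<in> {D \<in> dissections (Suc m) k. regions_at_last (Suc m) D = s}"
    if j: "j = s \<or> j = s - 1" and D: "is_dissection m D" "card D + 1 + s = k + j"
      "j \<le> regions_at_last m D" for j D
  proof -
    have "D \<subseteq> diagonals m" using D(1) unfolding is_dissection_def by simp
    then have "j < length (fan_list m D)" using fan_list(4)[OF m] D(3) by simp
    moreover have "s \<le> j + 1" using j by auto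
    ultimately have "is_dissection (Suc m) (extend m s j D)" "card (extend m s j D) + j = card D + s"
      "regions_at_last (Suc m) (extend m s j D) = s"
      using is_dissection_extend[OF m D(1) s] card_extend[OF m D(1) s]
        regions_at_last_extend[OF m D(1) s] by simp_all
    then show ?thesis using D(2) unfolding mem_dissections_iff by simp
  qed
  fix E assume "E \<in> extend m s s ` {D \<in> dissections m k. s \<le> regions_at_last m D}
      \<union> extend m s (s - 1) ` {D \<in> dissections m (k - 1). s - 1 \<le> regions_at_last m D}"
  then show "E \<in> {D \<in> dissections (Suc m) k. regions_at_last (Suc m) D = s}"
  proof (elim UnE imageE CollectE conjE)
    fix D assume "E = extend m s s D" "D \<in> dissections m k" "s \<le> regions_at_last m D"
    then show ?thesis using ext[of s D] unfolding mem_dissections_iff by auto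
  next
    fix D assume "E = extend m s (s - 1) D" "D \<in> dissections m (k - 1)" "s - 1 \<le> regions_at_last m D"
    then show ?thesis using ext[of "s - 1" D] s unfolding mem_dissections_iff by auto
  qed
qed

lemma card_dissections_regions_at_last_eq:
  assumes m: "3 \<le> m" and s: "1 \<le> s"
  shows "card {D \<in> dissections (Suc m) k. regions_at_last (Suc m) D = s}
    = card {D \<in> dissections m k. s \<le> regions_at_last m D}
      + card {D \<in> dissections m (k - 1). s - 1 \<le> regions_at_last m D}"
proof -
  let ?X1 = "{D \<in> dissections m k. s \<le> regions_at_last m D}"
    and ?X2 = "{D \<in> dissections m (k - 1). s - 1 \<le> regions_at_last m D}"
  have in_range: "j < length (fan_list m D)" "is_dissection m D"
    if "D \<in> dissections m k'" "j \<le> regions_at_last m D" for D j k'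
    using that fan_list(4)[OF m] unfolding mem_dissections_iff is_dissection_def by auto
  have inj1: "inj_on (extend m s s) ?X1"
    by (rule inj_on_inverseI[where g = "contract m"]) (use in_range s contract_extend[OF m] in blast)
  have inj2: "inj_on (extend m s (s - 1)) ?X2"
    by (rule inj_on_inverseI[where g = "contract m"]) (use in_range s contract_extend[OF m] in auto)
  have no_triangle: "\<not> last_triangle m (extend m s s D)" if "D \<in> ?X1" for D
    using last_triangle_extend_iff[OF m] in_range[of D k s] that s by auto
  have triangle: "last_triangle m (extend m s (s - 1) D)" if "D \<in> ?X2" for D
    using last_triangle_extend_iff[OF m] in_range[of D "k - 1" "s - 1"] that s by auto
  have "E \<notin> extend m s (s - 1) ` ?X2" if "E \<in> extend m s s ` ?X1" for E
  proof -
    from that obtain D where "D \<in> ?X1" "E = extend m s s D" by (rule imageE)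
    then have "\<not> last_triangle m E" using no_triangle by simp
    then show ?thesis using triangle by (auto simp del: mem_Collect_eq)
  qed
  then have "extend m s s ` ?X1 \<inter> extend m s (s - 1) ` ?X2 = {}" by blast
  then have "card (extend m s s ` ?X1 \<union> extend m s (s - 1) ` ?X2)
      = card (extend m s s ` ?X1) + card (extend m s (s - 1) ` ?X2)"
    by (intro card_Un_disjoint) (simp_all add: finite_dissections)
  then show ?thesis
    unfolding dissections_regions_at_last_eq[OF assms] card_image[OF inj1] card_image[OF inj2] .
qed

lemma dissections_3: "dissections 3 k = (if k = 1 then {{}} else {})"
proof -
  have "diagonals 3 = {}" unfolding diagonals_def by auto
  then show ?thesis unfolding dissections_def by auto
qed

theorem card_dissections: "card (dissections (Suc (Suc (Suc n))) k) = total_count n k"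
proof (rule refined_count_family.card_eq_total_count[where X = "\<lambda>n k. dissections (Suc (Suc (Suc n))) k"
      and stat = "\<lambda>n k D. regions_at_last (Suc (Suc (Suc n))) D"], unfold_locales)
  show "1 \<le> regions_at_last (Suc (Suc (Suc n))) D \<and> regions_at_last (Suc (Suc (Suc n))) D \<le> k"
    if "D \<in> dissections (Suc (Suc (Suc n))) k" for n k D
    using that regions_at_last_le[of D] unfolding mem_dissections_iff is_dissection_def regions_at_last_def
    by fastforce
  show "card {D \<in> dissections (Suc (Suc (Suc 0))) k. regions_at_last (Suc (Suc (Suc 0))) D = s}
      = refined_count 0 k s" for k s
  proof -
    have "{D \<in> dissections 3 k. regions_at_last 3 D = s} = (if k = 1 \<and> s = 1 then {{}} else {})"
      unfolding dissections_3 regions_at_last_def lower_nbrs_def by auto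
    then show ?thesis by (simp add: numeral_3_eq_3)
  qed
qed (simp_all add: finite_dissections card_dissections_regions_at_last_eq)

theorem mainTheorem5:
  fixes n k :: nat
  assumes "n \<ge> 1" and "k \<ge> 1"
  shows "card (f_words n k) = card (dissections (n + 2) k)
    \<and> real (card (f_words n k)) = (1 / real k) * real ((n - 1) choose (k - 1)) * real ((n + k) choose (k - 1))"
proof -
  obtain n' where n: "n = Suc n'" using assms(1) by (cases n) auto
  have "card (f_words n k) = total_count n' k" using card_f_words n by simp
  moreover have "card (dissections (n + 2) k) = total_count n' k" using card_dissections[of n' k] n by simp
  moreover have "real (total_count n' k)
      = (1 / real k) * real ((n - 1) choose (k - 1)) * real ((n + k) choose (k - 1))"
    using total_count_closed_form[of n' k] n by simp
  ultimately show ?thesis by simp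
qed

end
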